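(* For a restless bandit and a family $\mathcal F\subseteq2^{N^{\{0,1\}}}$ as in the context, suppose $w^S_j>0$ for all $S\in\mathcal F$ and $j\in N^{\{0,1\}}$. Then for every $S\in\mathcal F$ and $j\in S$, with vectors indexed by $N$: (a) $\mathbf v^{S\setminus\{j\}}-\mathbf v^S=\dfrac{c^S_j}{w^S_j}\,(\mathbf b^S-\mathbf b^{S\setminus\{j\}})=\dfrac{c^{S\setminus\{j\}}_j}{w^{S\setminus\{j\}}_j}\,(\mathbf b^S-\mathbf b^{S\setminus\{j\}})$; (b) $\dfrac{c^S_j}{w^S_j}=\dfrac{c^{S\setminus\{j\}}_j}{w^{S\setminus\{j\}}_j}$; (c) $\mathbf c^S-\mathbf c^{S\setminus\{j\}}=\dfrac{c^S_j}{w^S_j}\,(\mathbf w^S-\mathbf w^{S\setminus\{j\}})$.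
   Context: Restless bandit: finite state space $N=N^{\{0,1\}}\cup N^{\{1\}}$ (disjoint); actions $a\in\{0,1\}$; one-period costs $h^a_i$; transition probabilities $p^a_{ij}$, with $p^1_{ij}=p^0_{ij}$ and $h^1_i=h^0_i$ for $i\in N^{\{1\}}$; discount factor $\beta\in(0,1)$; activity weights $\theta^1_j>0$. For $S\subseteq N^{\{0,1\}}$ the $S$-active policy is active on $S\cup N^{\{1\}}$ and passive elsewhere; under it, from $X(0)=i$: $v^S_i=E_i[\sum_{t\ge0}h^{a(t)}_{X(t)}\beta^t]$, $b^S_i=E_i[\sum_{t\ge0}\theta^1_{X(t)}a(t)\beta^t]$; $\mathbf v^S=(v^S_i)_{i\in N}$, $\mathbf b^S=(b^S_i)_{i\in N}$. Marginal workloads $w^S_i=\theta^1_i1\{i\in N^{\{0,1\}}\}+\beta\sum_j(p^1_{ij}-p^0_{ij})b^S_j$, marginal costs $c^S_i=h^0_i-h^1_i+\beta\sum_j(p^0_{ij}-p^1_{ij})v^S_j$, $\mathbf w^S=(w^S_i)_{i\in N}$, $\mathbf c^S=(c^S_i)_{i\in N}$. *)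

theory Defs
  imports Complex_Main
begin

text \<open>Actions are the naturals 0 (passive)
  and 1 (active). p a i j: transition probabilities, h a i: one-period costs,
  th i: activity weight theta^1_i, beta: discount factor.\<close>

definition restless_bandit ::
  "'a set \<Rightarrow> 'a set \<Rightarrow> (nat \<Rightarrow> 'a \<Rightarrow> 'a \<Rightarrow> real) \<Rightarrow> (nat \<Rightarrow> 'a \<Rightarrow> real)
   \<Rightarrow> ('a \<Rightarrow> real) \<Rightarrow> real \<Rightarrow> bool" where
  "restless_bandit N01 N1 p h th beta \<longleftrightarrow>
     finite (N01 \<union> N1) \<and> N01 \<inter> N1 = {} \<and>
     (\<forall>a\<in>{0,1}. \<forall>i\<in>N01 \<union> N1. \<forall>j\<in>N01 \<union> N1. 0 \<le> p a i j) \<and>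
     (\<forall>a\<in>{0,1}. \<forall>i\<in>N01 \<union> N1. (\<Sum>j\<in>N01 \<union> N1. p a i j) = 1) \<and>
     (\<forall>i\<in>N1. \<forall>j\<in>N01 \<union> N1. p 1 i j = p 0 i j) \<and>
     (\<forall>i\<in>N1. h 1 i = h 0 i) \<and>
     0 < beta \<and> beta < 1 \<and>
     (\<forall>j\<in>N01 \<union> N1. 0 < th j)"

definition act :: "'a set \<Rightarrow> 'a set \<Rightarrow> 'a \<Rightarrow> nat" where
  "act N1 S i = (if i \<in> S \<union> N1 then 1 else 0)"

fun tprob :: "'a set \<Rightarrow> 'a set \<Rightarrow> (nat \<Rightarrow> 'a \<Rightarrow> 'a \<Rightarrow> real) \<Rightarrow> 'a set
    \<Rightarrow> nat \<Rightarrow> 'a \<Rightarrow> 'a \<Rightarrow> real" where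
  "tprob N01 N1 p S 0 i k = (if i = k then 1 else 0)"
| "tprob N01 N1 p S (Suc t) i k =
     (\<Sum>m\<in>N01 \<union> N1. tprob N01 N1 p S t i m * p (act N1 S m) m k)"

text \<open>v^S_i = E_i[sum_t h^{a(t)}_{X(t)} beta^t], written as
  sum_t beta^t sum_k P(X(t)=k) h^{a(k)}_k.\<close>
definition vS where
  "vS N01 N1 p h beta S i =
     (\<Sum>t. beta ^ t * (\<Sum>k\<in>N01 \<union> N1. tprob N01 N1 p S t i k * h (act N1 S k) k))"

text \<open>b^S_i = E_i[sum_t theta^1_{X(t)} a(t) beta^t].\<close>
definition bS where
  "bS N01 N1 p th beta S i =
     (\<Sum>t. beta ^ t * (\<Sum>k\<in>N01 \<union> N1. tprob N01 N1 p S t i k * (th k * real (act N1 S k))))"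

definition wS where
  "wS N01 N1 p th beta S i =
     th i * (if i \<in> N01 then 1 else 0)
     + beta * (\<Sum>j\<in>N01 \<union> N1. (p 1 i j - p 0 i j) * bS N01 N1 p th beta S j)"

definition cS where
  "cS N01 N1 p h beta S i =
     h 0 i - h 1 i
     + beta * (\<Sum>j\<in>N01 \<union> N1. (p 0 i j - p 1 i j) * vS N01 N1 p h beta S j)"

end

theory Submission
  imports Defs
begin

text \<open>Write T = S - {j}. Each value vector solves a Bellman equation x = r + beta P x for its
  policy, and the S- and T-active policies differ only in state j. Hence v^T - v^S solves a
  Bellman equation whose reward is concentrated at j, of size c^S_j under P_T and c^T_j under
  P_S; likewise b^S - b^T, with sizes w^S_j under P_T and w^T_j under P_S. As beta P is a
  contraction in the max-norm, such solutions are unique, so they scale with the size of the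
  reward: this gives (a), and (b) because b^S - b^T does not vanish. Part (c) follows from (a)
  since c and w are affine in v and b with opposite coefficients.\<close>

definition stochastic_on :: "'a set \<Rightarrow> ('a \<Rightarrow> 'a \<Rightarrow> real) \<Rightarrow> bool" where
  "stochastic_on N q \<longleftrightarrow> (\<forall>i\<in>N. \<forall>k\<in>N. 0 \<le> q i k) \<and> (\<forall>i\<in>N. (\<Sum>k\<in>N. q i k) = 1)"

fun kernel_pow :: "'a set \<Rightarrow> ('a \<Rightarrow> 'a \<Rightarrow> real) \<Rightarrow> nat \<Rightarrow> 'a \<Rightarrow> 'a \<Rightarrow> real" where
  "kernel_pow N q 0 i k = (if i = k then 1 else 0)"
| "kernel_pow N q (Suc t) i k = (\<Sum>m\<in>N. kernel_pow N q t i m * q m k)"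

definition discounted_value ::
  "'a set \<Rightarrow> ('a \<Rightarrow> 'a \<Rightarrow> real) \<Rightarrow> real \<Rightarrow> ('a \<Rightarrow> real) \<Rightarrow> 'a \<Rightarrow> real" where
  "discounted_value N q beta r i = (\<Sum>t. beta ^ t * (\<Sum>k\<in>N. kernel_pow N q t i k * r k))"

definition bellman_solution ::
  "'a set \<Rightarrow> ('a \<Rightarrow> 'a \<Rightarrow> real) \<Rightarrow> real \<Rightarrow> ('a \<Rightarrow> real) \<Rightarrow> ('a \<Rightarrow> real) \<Rightarrow> bool" where
  "bellman_solution N q beta r x \<longleftrightarrow> (\<forall>i\<in>N. x i = r i + beta * (\<Sum>m\<in>N. q i m * x m))"

lemma kernel_pow_nonneg:
  assumes "stochastic_on N q" and "k \<in> N"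
  shows "0 \<le> kernel_pow N q t i k"
  using assms(2)
  by (induction t arbitrary: k)
    (use assms(1) in \<open>auto intro!: sum_nonneg simp: stochastic_on_def\<close>)

lemma kernel_pow_row_sum:
  assumes "finite N" and "stochastic_on N q" and "i \<in> N"
  shows "(\<Sum>k\<in>N. kernel_pow N q t i k) = 1"
proof (induction t)
  case 0
  then show ?case using assms by simp
next
  case (Suc t)
  have "(\<Sum>k\<in>N. kernel_pow N q (Suc t) i k) = (\<Sum>m\<in>N. kernel_pow N q t i m * (\<Sum>k\<in>N. q m k))"
    unfolding kernel_pow.simps sum_distrib_right sum_distrib_left mult.assoc by (rule sum.swap)
  also have "\<dots> = (\<Sum>m\<in>N. kernel_pow N q t i m)"
    using assms(2) by (simp add: stochastic_on_def)
  finally show ?case using Suc by simp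
qed

lemma kernel_pow_Suc_left:
  assumes "finite N" and "i \<in> N" and "k \<in> N"
  shows "kernel_pow N q (Suc t) i k = (\<Sum>m\<in>N. q i m * kernel_pow N q t m k)"
  using assms(3)
proof (induction t arbitrary: k)
  case 0
  have "(\<Sum>m\<in>N. (if i = m then 1 else 0) * q m k) = (\<Sum>m\<in>N. if i = m then q i k else 0)"
    by (rule sum.cong) auto
  moreover have "(\<Sum>m\<in>N. q i m * (if m = k then 1 else 0)) = (\<Sum>m\<in>N. if k = m then q i k else 0)"
    by (rule sum.cong) auto
  ultimately show ?case using assms(1,2) 0 by simp
next
  case (Suc t)
  have "kernel_pow N q (Suc (Suc t)) i k
      = (\<Sum>m\<in>N. (\<Sum>n\<in>N. q i n * kernel_pow N q t n m) * q m k)"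
    using Suc.IH by (simp del: kernel_pow.simps add: kernel_pow.simps(2)[of _ _ "Suc t"])
  also have "\<dots> = (\<Sum>n\<in>N. q i n * (\<Sum>m\<in>N. kernel_pow N q t n m * q m k))"
    unfolding sum_distrib_left sum_distrib_right mult.assoc by (rule sum.swap)
  finally show ?case by (simp only: kernel_pow.simps(2))
qed

lemma summable_discounted_reward:
  assumes "finite N" and "stochastic_on N q" and "\<bar>beta\<bar> < 1" and "i \<in> N"
  shows "summable (\<lambda>t. beta ^ t * (\<Sum>k\<in>N. kernel_pow N q t i k * r k))"
proof (rule summable_comparison_test)
  let ?B = "\<Sum>k\<in>N. \<bar>r k\<bar>"
  show "summable (\<lambda>t. \<bar>beta\<bar> ^ t * ?B)"
    using assms(3) by (simp add: summable_mult2)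
  have "\<bar>\<Sum>k\<in>N. kernel_pow N q t i k * r k\<bar> \<le> ?B" for t
  proof -
    have "\<bar>\<Sum>k\<in>N. kernel_pow N q t i k * r k\<bar> \<le> (\<Sum>k\<in>N. kernel_pow N q t i k * ?B)"
    proof (rule order_trans[OF sum_abs sum_mono])
      fix k assume "k \<in> N"
      then have "\<bar>r k\<bar> \<le> ?B" and "0 \<le> kernel_pow N q t i k"
        using assms(1,2) by (auto intro: member_le_sum kernel_pow_nonneg)
      then show "\<bar>kernel_pow N q t i k * r k\<bar> \<le> kernel_pow N q t i k * ?B"
        by (simp add: abs_mult mult_left_mono)
    qed
    also have "\<dots> = ?B"
      using kernel_pow_row_sum[OF assms(1,2,4)] by (simp add: sum_distrib_right[symmetric])
    finally show ?thesis .
  qed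
  then show "\<exists>N0. \<forall>t\<ge>N0. norm (beta ^ t * (\<Sum>k\<in>N. kernel_pow N q t i k * r k)) \<le> \<bar>beta\<bar> ^ t * ?B"
    by (auto simp: abs_mult power_abs intro!: mult_left_mono)
qed

lemma bellman_solution_discounted_value:
  assumes "finite N" and "stochastic_on N q" and "\<bar>beta\<bar> < 1"
  shows "bellman_solution N q beta r (discounted_value N q beta r)"
  unfolding bellman_solution_def
proof
  fix i assume i: "i \<in> N"
  define f where "f m t = beta ^ t * (\<Sum>k\<in>N. kernel_pow N q t m k * r k)" for m t
  have sm: "summable (f m)" if "m \<in> N" for m
    unfolding f_def using summable_discounted_reward[OF assms that] .
  have "(\<Sum>k\<in>N. (if i = k then 1 else 0) * r k) = (\<Sum>k\<in>N. if i = k then r i else 0)"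
    by (rule sum.cong) auto
  then have f0: "f i 0 = r i"
    using i assms(1) by (simp add: f_def)
  have fSuc: "f i (Suc t) = beta * (\<Sum>m\<in>N. q i m * f m t)" for t
  proof -
    have "(\<Sum>k\<in>N. kernel_pow N q (Suc t) i k * r k)
        = (\<Sum>k\<in>N. \<Sum>m\<in>N. q i m * kernel_pow N q t m k * r k)"
      using kernel_pow_Suc_left[OF assms(1) i] by (simp add: sum_distrib_right)
    also have "\<dots> = (\<Sum>m\<in>N. q i m * (\<Sum>k\<in>N. kernel_pow N q t m k * r k))"
      unfolding sum_distrib_left mult.assoc by (rule sum.swap)
    finally show ?thesis
      unfolding f_def by (simp add: sum_distrib_left mult_ac)
  qed
  have dv: "discounted_value N q beta r m = suminf (f m)" for m
    unfolding discounted_value_def f_def ..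
  have "discounted_value N q beta r i = f i 0 + (\<Sum>t. f i (Suc t))"
    unfolding dv using suminf_split_head[OF sm[OF i]] by simp
  also have "(\<Sum>t. f i (Suc t)) = beta * (\<Sum>t. \<Sum>m\<in>N. q i m * f m t)"
    unfolding fSuc by (intro suminf_mult summable_sum summable_mult sm)
  also have "(\<Sum>t. \<Sum>m\<in>N. q i m * f m t) = (\<Sum>m\<in>N. q i m * suminf (f m))"
    by (simp add: suminf_sum summable_mult sm suminf_mult)
  finally show "discounted_value N q beta r i
      = r i + beta * (\<Sum>m\<in>N. q i m * discounted_value N q beta r m)"
    using f0 by (simp add: dv)
qed

lemma bellman_solution_zero_source:
  assumes "finite N" and "stochastic_on N q" and "\<bar>beta\<bar> < 1"
    and x: "bellman_solution N q beta (\<lambda>_. 0) x" and "i \<in> N"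
  shows "x i = 0"
proof -
  define M where "M = Max ((\<lambda>k. \<bar>x k\<bar>) ` N)"
  have le_M: "\<bar>x k\<bar> \<le> M" if "k \<in> N" for k
    unfolding M_def using assms(1) that by auto
  have "\<bar>x k\<bar> \<le> \<bar>beta\<bar> * M" if k: "k \<in> N" for k
  proof -
    have "\<bar>\<Sum>m\<in>N. q k m * x m\<bar> \<le> (\<Sum>m\<in>N. q k m * M)"
    proof (rule order_trans[OF sum_abs sum_mono])
      fix m assume "m \<in> N"
      then show "\<bar>q k m * x m\<bar> \<le> q k m * M"
        using assms(2) k le_M by (simp add: stochastic_on_def abs_mult mult_left_mono)
    qed
    also have "\<dots> = M"
      using assms(2) k by (simp add: stochastic_on_def sum_distrib_right[symmetric])
    finally show ?thesis
      using x k by (simp add: bellman_solution_def abs_mult mult_left_mono)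
  qed
  moreover have "M \<in> (\<lambda>k. \<bar>x k\<bar>) ` N"
    unfolding M_def using assms(1,5) by (intro Max_in) auto
  then obtain k where "k \<in> N" and "M = \<bar>x k\<bar>" by auto
  ultimately have "M \<le> \<bar>beta\<bar> * M" by simp
  then have "M \<le> 0"
    using assms(3) by (smt (verit) mult_le_cancel_right1)
  then show ?thesis using le_M[OF assms(5)] by simp
qed

lemma bellman_solution_point_source_proportional:
  assumes "finite N" and "stochastic_on N q" and "\<bar>beta\<bar> < 1"
    and x: "bellman_solution N q beta (\<lambda>i. if i = j then c else 0) x"
    and y: "bellman_solution N q beta (\<lambda>i. if i = j then w else 0) y"
    and "w \<noteq> 0" and "i \<in> N"
  shows "x i = c / w * y i"
proof -
  have "bellman_solution N q beta (\<lambda>_. 0) (\<lambda>k. x k - c / w * y k)"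
    unfolding bellman_solution_def
  proof
    fix k assume "k \<in> N"
    then have "x k - c / w * y k = ((if k = j then c else 0) - c / w * (if k = j then w else 0))
        + beta * ((\<Sum>m\<in>N. q k m * x m) - c / w * (\<Sum>m\<in>N. q k m * y m))"
      using x y by (simp add: bellman_solution_def algebra_simps)
    also have "\<dots> = beta * (\<Sum>m\<in>N. q k m * (x m - c / w * y m))"
      using \<open>w \<noteq> 0\<close>
      by (simp add: sum_distrib_left sum_subtractf right_diff_distrib mult_ac)
    finally show "x k - c / w * y k = 0 + beta * (\<Sum>m\<in>N. q k m * (x m - c / w * y m))"
      by simp
  qed
  from bellman_solution_zero_source[OF assms(1-3) this assms(7)] show ?thesis
    by simp
qed

lemma bellman_solution_point_source_nonzero:
  assumes "bellman_solution N q beta (\<lambda>i. if i = j then w else 0) x" and "w \<noteq> 0" and "j \<in> N"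
  shows "\<exists>i\<in>N. x i \<noteq> 0"
proof (rule ccontr)
  assume "\<not> (\<exists>i\<in>N. x i \<noteq> 0)"
  then have "x j = w"
    using assms(1,3) unfolding bellman_solution_def by simp
  with \<open>\<not> (\<exists>i\<in>N. x i \<noteq> 0)\<close> assms(2,3) show False by simp
qed

lemma bellman_solution_point_source_size_nonzero:
  assumes "finite N" and "stochastic_on N q" and "\<bar>beta\<bar> < 1"
    and x: "bellman_solution N q beta (\<lambda>i. if i = j then w else 0) x"
    and x': "bellman_solution N q' beta (\<lambda>i. if i = j then w' else 0) x"
    and "w' \<noteq> 0" and "j \<in> N"
  shows "w \<noteq> 0"
proof
  assume "w = 0"
  with x have "bellman_solution N q beta (\<lambda>_. 0) x"
    by (simp only: if_cancel)
  then have "\<forall>i\<in>N. x i = 0"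
    using bellman_solution_zero_source[OF assms(1-3)] by blast
  with bellman_solution_point_source_nonzero[OF x' assms(6,7)] show False
    by blast
qed

lemma bellman_solution_diff:
  assumes x: "bellman_solution N q beta r x" and y: "bellman_solution N q' beta r' y"
    and agree: "\<And>i. i \<in> N \<Longrightarrow> i \<noteq> j \<Longrightarrow> q i = q' i \<and> r i = r' i"
  shows "bellman_solution N q beta
           (\<lambda>i. if i = j then r j - r' j + beta * (\<Sum>m\<in>N. (q j m - q' j m) * y m) else 0)
           (\<lambda>i. x i - y i)" (is ?under_q)
    and "bellman_solution N q' beta
           (\<lambda>i. if i = j then r j - r' j + beta * (\<Sum>m\<in>N. (q j m - q' j m) * x m) else 0)
           (\<lambda>i. x i - y i)" (is ?under_q')
proof -
  have split_left: "x i - y i = (r i - r' i + beta * (\<Sum>m\<in>N. (q i m - q' i m) * y m))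
      + beta * (\<Sum>m\<in>N. q i m * (x m - y m))"
    and split_right: "x i - y i = (r i - r' i + beta * (\<Sum>m\<in>N. (q i m - q' i m) * x m))
      + beta * (\<Sum>m\<in>N. q' i m * (x m - y m))" if "i \<in> N" for i
    using x y that
    by (simp_all add: bellman_solution_def sum_subtractf left_diff_distrib right_diff_distrib algebra_simps)
  show ?under_q
    unfolding bellman_solution_def using split_left agree by auto
  show ?under_q'
    unfolding bellman_solution_def using split_right agree by auto
qed

definition policy_kernel :: "'a set \<Rightarrow> (nat \<Rightarrow> 'a \<Rightarrow> 'a \<Rightarrow> real) \<Rightarrow> 'a set \<Rightarrow> 'a \<Rightarrow> 'a \<Rightarrow> real" where
  "policy_kernel N1 p S i = p (act N1 S i) i"

lemma tprob_eq_kernel_pow: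
  "tprob N01 N1 p S t = kernel_pow (N01 \<union> N1) (policy_kernel N1 p S) t"
  by (induction t) (simp_all add: fun_eq_iff policy_kernel_def)

lemma stochastic_on_policy_kernel:
  assumes "restless_bandit N01 N1 p h th beta"
  shows "stochastic_on (N01 \<union> N1) (policy_kernel N1 p S)"
  using assms unfolding restless_bandit_def stochastic_on_def policy_kernel_def act_def
  by auto

lemma bellman_solution_policy_value:
  assumes "restless_bandit N01 N1 p h th beta"
  shows "bellman_solution (N01 \<union> N1) (policy_kernel N1 p S) beta r
           (\<lambda>i. \<Sum>t. beta ^ t * (\<Sum>k\<in>N01 \<union> N1. tprob N01 N1 p S t i k * r k))"
proof -
  have "finite (N01 \<union> N1)" and "\<bar>beta\<bar> < 1"
    using assms by (auto simp: restless_bandit_def)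
  moreover have "(\<lambda>i. \<Sum>t. beta ^ t * (\<Sum>k\<in>N01 \<union> N1. tprob N01 N1 p S t i k * r k))
      = discounted_value (N01 \<union> N1) (policy_kernel N1 p S) beta r"
    by (simp add: fun_eq_iff discounted_value_def tprob_eq_kernel_pow)
  ultimately show ?thesis
    using bellman_solution_discounted_value stochastic_on_policy_kernel[OF assms] by metis
qed

lemma bellman_solution_vS:
  assumes "restless_bandit N01 N1 p h th beta"
  shows "bellman_solution (N01 \<union> N1) (policy_kernel N1 p S) beta (\<lambda>k. h (act N1 S k) k)
           (vS N01 N1 p h beta S)"
  using bellman_solution_policy_value[OF assms] by (simp add: vS_def[abs_def])

lemma bellman_solution_bS:
  assumes "restless_bandit N01 N1 p h th beta"
  shows "bellman_solution (N01 \<union> N1) (policy_kernel N1 p S) beta (\<lambda>k. th k * real (act N1 S k))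
           (bS N01 N1 p th beta S)"
  using bellman_solution_policy_value[OF assms] by (simp add: bS_def[abs_def])

lemma act_Diff_active:
  assumes "j \<in> S" and "j \<notin> N1"
  shows "act N1 S j = 1" and "act N1 (S - {j}) j = 0"
    and "i \<noteq> j \<Longrightarrow> act N1 (S - {j}) i = act N1 S i"
  using assms by (auto simp: act_def)

lemma bellman_solution_vS_diff_remove:
  assumes RB: "restless_bandit N01 N1 p h th beta" and "j \<in> S" and "j \<in> N01"
  shows "bellman_solution (N01 \<union> N1) (policy_kernel N1 p (S - {j})) beta
           (\<lambda>i. if i = j then cS N01 N1 p h beta S j else 0)
           (\<lambda>i. vS N01 N1 p h beta (S - {j}) i - vS N01 N1 p h beta S i)"
      (is ?under_removed)
    and "bellman_solution (N01 \<union> N1) (policy_kernel N1 p S) beta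
           (\<lambda>i. if i = j then cS N01 N1 p h beta (S - {j}) j else 0)
           (\<lambda>i. vS N01 N1 p h beta (S - {j}) i - vS N01 N1 p h beta S i)"
      (is ?under_S)
proof -
  have "j \<notin> N1" using assms(3) RB by (auto simp: restless_bandit_def)
  note act = act_Diff_active[OF assms(2) this]
  have agree: "\<And>i. i \<in> N01 \<union> N1 \<Longrightarrow> i \<noteq> j \<Longrightarrow>
      policy_kernel N1 p (S - {j}) i = policy_kernel N1 p S i \<and> h (act N1 (S - {j}) i) i = h (act N1 S i) i"
    using act(3) by (simp add: policy_kernel_def)
  have source: "h (act N1 (S - {j}) j) j - h (act N1 S j) j
      + beta * (\<Sum>m\<in>N01 \<union> N1. (policy_kernel N1 p (S - {j}) j m - policy_kernel N1 p S j m)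
          * vS N01 N1 p h beta U m) = cS N01 N1 p h beta U j" for U
    by (simp add: cS_def policy_kernel_def act)
  from bellman_solution_diff[where j = j, OF bellman_solution_vS[OF RB] bellman_solution_vS[OF RB] agree]
  show ?under_removed and ?under_S
    by (simp_all only: source simp_thms)
qed

lemma bellman_solution_bS_diff_remove:
  assumes RB: "restless_bandit N01 N1 p h th beta" and "j \<in> S" and "j \<in> N01"
  shows "bellman_solution (N01 \<union> N1) (policy_kernel N1 p S) beta
           (\<lambda>i. if i = j then wS N01 N1 p th beta (S - {j}) j else 0)
           (\<lambda>i. bS N01 N1 p th beta S i - bS N01 N1 p th beta (S - {j}) i)"
      (is ?under_S)
    and "bellman_solution (N01 \<union> N1) (policy_kernel N1 p (S - {j})) beta
           (\<lambda>i. if i = j then wS N01 N1 p th beta S j else 0)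
           (\<lambda>i. bS N01 N1 p th beta S i - bS N01 N1 p th beta (S - {j}) i)"
      (is ?under_removed)
proof -
  have "j \<notin> N1" using assms(3) RB by (auto simp: restless_bandit_def)
  note act = act_Diff_active[OF assms(2) this]
  have agree: "\<And>i. i \<in> N01 \<union> N1 \<Longrightarrow> i \<noteq> j \<Longrightarrow>
      policy_kernel N1 p S i = policy_kernel N1 p (S - {j}) i
      \<and> th i * real (act N1 S i) = th i * real (act N1 (S - {j}) i)"
    using act(3) by (simp add: policy_kernel_def)
  have source: "th j * real (act N1 S j) - th j * real (act N1 (S - {j}) j)
      + beta * (\<Sum>m\<in>N01 \<union> N1. (policy_kernel N1 p S j m - policy_kernel N1 p (S - {j}) j m)
          * bS N01 N1 p th beta U m) = wS N01 N1 p th beta U j" for U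
    using assms(3) by (simp add: wS_def policy_kernel_def act)
  from bellman_solution_diff[where j = j, OF bellman_solution_bS[OF RB] bellman_solution_bS[OF RB] agree]
  show ?under_S and ?under_removed
    by (simp_all only: source simp_thms)
qed

lemma cS_diff_eq_scaled_wS_diff:
  assumes "\<forall>m\<in>N01 \<union> N1. vS N01 N1 p h beta U' m - vS N01 N1 p h beta U m
             = \<kappa> * (bS N01 N1 p th beta U m - bS N01 N1 p th beta U' m)"
  shows "cS N01 N1 p h beta U i - cS N01 N1 p h beta U' i
       = \<kappa> * (wS N01 N1 p th beta U i - wS N01 N1 p th beta U' i)"
proof -
  have "cS N01 N1 p h beta U i - cS N01 N1 p h beta U' i
      = beta * ((\<Sum>m\<in>N01 \<union> N1. (p 0 i m - p 1 i m) * vS N01 N1 p h beta U m)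
              - (\<Sum>m\<in>N01 \<union> N1. (p 0 i m - p 1 i m) * vS N01 N1 p h beta U' m))"
    by (simp add: cS_def right_diff_distrib)
  also have "\<dots> = beta * (\<Sum>m\<in>N01 \<union> N1. (p 1 i m - p 0 i m)
      * (vS N01 N1 p h beta U' m - vS N01 N1 p h beta U m))"
    unfolding sum_subtractf[symmetric]
    by (intro arg_cong[where f = "(*) beta"] sum.cong) (simp_all add: algebra_simps)
  also have "\<dots> = \<kappa> * (beta * (\<Sum>m\<in>N01 \<union> N1. (p 1 i m - p 0 i m)
      * (bS N01 N1 p th beta U m - bS N01 N1 p th beta U' m)))"
    using assms by (simp add: sum_distrib_left mult_ac)
  also have "\<dots> = \<kappa> * (beta * ((\<Sum>m\<in>N01 \<union> N1. (p 1 i m - p 0 i m) * bS N01 N1 p th beta U m)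
              - (\<Sum>m\<in>N01 \<union> N1. (p 1 i m - p 0 i m) * bS N01 N1 p th beta U' m)))"
    unfolding sum_subtractf[symmetric]
    by (intro arg_cong[where f = "\<lambda>x. \<kappa> * (beta * x)"] sum.cong) (simp_all add: algebra_simps)
  also have "\<dots> = \<kappa> * (wS N01 N1 p th beta U i - wS N01 N1 p th beta U' i)"
    by (simp add: wS_def right_diff_distrib)
  finally show ?thesis .
qed

theorem proposition7:
  fixes N01 N1 :: "'a set" and p :: "nat \<Rightarrow> 'a \<Rightarrow> 'a \<Rightarrow> real"
    and h :: "nat \<Rightarrow> 'a \<Rightarrow> real" and th :: "'a \<Rightarrow> real" and beta :: real
    and F :: "'a set set" and S :: "'a set" and j :: 'a
  assumes RB: "restless_bandit N01 N1 p h th beta"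
    and F: "F \<subseteq> Pow N01"
    and wpos: "\<forall>T\<in>F. \<forall>k\<in>N01. 0 < wS N01 N1 p th beta T k"
    and S: "S \<in> F" and j: "j \<in> S"
  shows "(\<forall>i\<in>N01 \<union> N1.
            vS N01 N1 p h beta (S - {j}) i - vS N01 N1 p h beta S i
              = cS N01 N1 p h beta S j / wS N01 N1 p th beta S j
                * (bS N01 N1 p th beta S i - bS N01 N1 p th beta (S - {j}) i)
          \<and> vS N01 N1 p h beta (S - {j}) i - vS N01 N1 p h beta S i
              = cS N01 N1 p h beta (S - {j}) j / wS N01 N1 p th beta (S - {j}) j
                * (bS N01 N1 p th beta S i - bS N01 N1 p th beta (S - {j}) i))
       \<and> cS N01 N1 p h beta S j / wS N01 N1 p th beta S j
           = cS N01 N1 p h beta (S - {j}) j / wS N01 N1 p th beta (S - {j}) j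
       \<and> (\<forall>i\<in>N01 \<union> N1.
            cS N01 N1 p h beta S i - cS N01 N1 p h beta (S - {j}) i
              = cS N01 N1 p h beta S j / wS N01 N1 p th beta S j
                * (wS N01 N1 p th beta S i - wS N01 N1 p th beta (S - {j}) i))"
proof -
  let ?N = "N01 \<union> N1" and ?T = "S - {j}"
  let ?v = "vS N01 N1 p h beta" and ?b = "bS N01 N1 p th beta"
    and ?c = "cS N01 N1 p h beta" and ?w = "wS N01 N1 p th beta"
  have fin: "finite ?N" and beta: "\<bar>beta\<bar> < 1"
    using RB by (auto simp: restless_bandit_def)
  note stoch = stochastic_on_policy_kernel[OF RB]
  have jN01: "j \<in> N01" using F S j by auto
  note vdiff = bellman_solution_vS_diff_remove[OF RB j jN01]
  note bdiff = bellman_solution_bS_diff_remove[OF RB j jN01]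
  have wS_ne: "?w S j \<noteq> 0" using wpos S jN01 by fastforce
  obtain k where k: "k \<in> ?N" "?b S k - ?b ?T k \<noteq> 0"
    using bellman_solution_point_source_nonzero[OF bdiff(2) wS_ne] jN01 by auto
  \<comment> \<open>not covered by the hypothesis: S - {j} need not lie in F\<close>
  have wT_ne: "?w ?T j \<noteq> 0"
    using bellman_solution_point_source_size_nonzero[OF fin stoch beta bdiff(1,2) wS_ne] jN01 by simp
  have a_S: "\<forall>i\<in>?N. ?v ?T i - ?v S i = ?c S j / ?w S j * (?b S i - ?b ?T i)"
    using bellman_solution_point_source_proportional[OF fin stoch beta vdiff(1) bdiff(2) wS_ne] by simp
  have a_T: "\<forall>i\<in>?N. ?v ?T i - ?v S i = ?c ?T j / ?w ?T j * (?b S i - ?b ?T i)"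
    using bellman_solution_point_source_proportional[OF fin stoch beta vdiff(2) bdiff(1) wT_ne] by simp
  have "?c S j / ?w S j * (?b S k - ?b ?T k) = ?c ?T j / ?w ?T j * (?b S k - ?b ?T k)"
    using a_S a_T k(1) by metis
  then have b: "?c S j / ?w S j = ?c ?T j / ?w ?T j"
    using k(2) by (simp only: mult_cancel_right) simp
  have c: "\<forall>i\<in>?N. ?c S i - ?c ?T i = ?c S j / ?w S j * (?w S i - ?w ?T i)"
    using cS_diff_eq_scaled_wS_diff[OF a_S] by blast
  show ?thesis using a_S a_T b c by blast
qed

end
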